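(* Let $\mathbb{F}\in\{\mathbb{R},\mathbb{C}\}$ and $1\le k\leq N<M$. Suppose $\Phi\in\mathcal{P}(M,N)$ and $\Psi\in\mathcal{P}(M,M-N)$ are Naimark complements. Then $\Phi$ maximizes $V_k$ over $\mathcal{P}(M,N)$ if and only if $\Psi$ maximizes $CV_{M-k}$ over $\mathcal{P}(M,M-N)$.
   Context: $\mathcal{P}(M,n)$ is the set of Parseval frames for $\mathbb{F}^n$ with $M$ vectors, i.e. families $\{\varphi_i\}_{i=1}^M\subseteq\mathbb{F}^n$ whose $n\times M$ matrix $\Phi$ satisfies $\Phi\Phi^*=I$. $\Phi\in\mathcal{P}(M,N)$ and $\Psi\in\mathcal{P}(M,M-N)$ are Naimark complements if $\Psi^*\Psi=I-\Phi^*\Phi$. For $K\subseteq[M]$, $\Phi_K$ is the submatrix of columns indexed by $K$. For an $n\times m$ matrix $F$: if $m\le n$, $v_m(F)=\sqrt{\det(F^*F)}$; if $m\ge n$, $cv_m(F)=\sqrt{\det(FF^* )}$. Then $V_k(\Phi)=\sum_{|K|=k}v_k(\Phi_K)$ for $k\le n$, and $CV_k(\Phi)=\sum_{|K|=k}cv_k(\Phi_K)$ for $k\ge n$. *)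

theory Defs
  imports Complex_Main "Jordan_Normal_Form.Determinant" "Jordan_Normal_Form.DL_Submatrix"
begin

definition scalars :: "bool \<Rightarrow> complex set" where
  "scalars is_real = (if is_real then \<real> else UNIV)"

definition adj :: "complex mat \<Rightarrow> complex mat" where
  "adj A = transpose_mat (map_mat cnj A)"

definition parseval :: "bool \<Rightarrow> nat \<Rightarrow> nat \<Rightarrow> complex mat \<Rightarrow> bool" where
  "parseval is_real M n Phi \<longleftrightarrow>
     Phi \<in> carrier_mat n M \<and> (\<forall>i<n. \<forall>j<M. Phi $$ (i,j) \<in> scalars is_real) \<and>
     Phi * adj Phi = 1\<^sub>m n"

definition naimark_complements :: "complex mat \<Rightarrow> complex mat \<Rightarrow> bool" where
  "naimark_complements Phi Psi \<longleftrightarrow> adj Psi * Psi = 1\<^sub>m (dim_col Phi) - adj Phi * Phi"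

definition cols_sub :: "complex mat \<Rightarrow> nat set \<Rightarrow> complex mat" where
  "cols_sub Phi K = submatrix Phi UNIV K"

text \<open>v_m(F) = sqrt(det(F^* F)), cv_m(F) = sqrt(det(F F^*)); these determinants are real
  and nonnegative, so we take the real part.\<close>
definition vol :: "complex mat \<Rightarrow> real" where
  "vol F = sqrt (Re (det (adj F * F)))"

definition covol :: "complex mat \<Rightarrow> real" where
  "covol F = sqrt (Re (det (F * adj F)))"

definition V :: "nat \<Rightarrow> complex mat \<Rightarrow> real" where
  "V k Phi = (\<Sum>K\<in>{K. K \<subseteq> {..<dim_col Phi} \<and> card K = k}. vol (cols_sub Phi K))"

definition CV :: "nat \<Rightarrow> complex mat \<Rightarrow> real" where
  "CV k Phi = (\<Sum>K\<in>{K. K \<subseteq> {..<dim_col Phi} \<and> card K = k}. covol (cols_sub Phi K))"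

end

theory Submission
  imports Defs
begin

(*
  For K \<subseteq> [M] with complement K', Naimark complementarity gives
  Phi_K\<^sup>* Phi_K = I - Psi_K\<^sup>* Psi_K and Psi_K' Psi_K'\<^sup>* = I - Psi_K Psi_K\<^sup>*, and by Sylvester's
  identity det (I - B A) = det (I - A B) these have the same determinant. Hence
  v_k(Phi_K) = cv_{M-k}(Psi_K'), and summing over K gives V_k(Phi) = CV_{M-k}(Psi).

  Conversely every Parseval frame Phi has a Naimark complement over the same field: the
  orthogonal projection I - Phi\<^sup>* Phi is factored as Psi\<^sup>* Psi with orthonormal rows by
  repeatedly splitting off a normalised column of the projection (Gram-Schmidt), and a trace
  count shows that Psi has M - N rows. So complementation matches P(M,N) with P(M,M-N),
  carrying V_k to CV_{M-k}, and maximisers correspond.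
*)

lemma adj_carrier_mat [simp]: "A \<in> carrier_mat n m \<Longrightarrow> adj A \<in> carrier_mat m n"
  unfolding adj_def by auto

lemma dim_adj [simp]: "dim_row (adj A) = dim_col A" "dim_col (adj A) = dim_row A"
  unfolding adj_def by auto

lemma index_adj [simp]: "i < dim_col A \<Longrightarrow> j < dim_row A \<Longrightarrow> adj A $$ (i,j) = cnj (A $$ (j,i))"
  unfolding adj_def by auto

lemma adj_adj [simp]: "adj (adj A) = A"
  by (rule eq_matI) auto

lemma adj_zero [simp]: "adj (0\<^sub>m n m) = 0\<^sub>m m n"
  by (rule eq_matI) auto

lemma adj_one [simp]: "adj (1\<^sub>m n) = 1\<^sub>m n"
  by (rule eq_matI) auto

lemma adj_mult: "A \<in> carrier_mat n m \<Longrightarrow> B \<in> carrier_mat m p \<Longrightarrow> adj (A * B) = adj B * adj A"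
  by (rule eq_matI) (auto simp: scalar_prod_def cnj_sum intro!: sum.cong)

lemma adj_minus: "A \<in> carrier_mat n m \<Longrightarrow> B \<in> carrier_mat n m \<Longrightarrow> adj (A - B) = adj A - adj B"
  by (rule eq_matI) auto

lemma adj_mult_self_carrier: "A \<in> carrier_mat r n \<Longrightarrow> adj A * A \<in> carrier_mat n n"
  by (rule mult_carrier_mat) auto

lemma mult_adj_mult_self:
  assumes A: "A \<in> carrier_mat r n" and orth: "A * adj A = 1\<^sub>m r"
  shows "A * (adj A * A) = A"
proof -
  have "A * (adj A * A) = A * adj A * A"
    by (rule assoc_mult_mat[symmetric]) (use A in auto)
  then show ?thesis using A orth by simp
qed

lemma one_minus_eq_swap:
  fixes A B :: "'a :: ring_1 mat"
  assumes "A \<in> carrier_mat n n" "B \<in> carrier_mat n n" "A = 1\<^sub>m n - B"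
  shows "B = 1\<^sub>m n - A"
  by (rule eq_matI) (use assms in auto)

lemma adj_append_rows:
  assumes "A \<in> carrier_mat r n" "B \<in> carrier_mat q n"
  shows "adj (A @\<^sub>r B) = four_block_mat (adj A) (adj B) (0\<^sub>m 0 r) (0\<^sub>m 0 q)"
  by (rule eq_matI) (use assms in \<open>auto simp: append_rows_def\<close>)

lemma append_rows_mult_adj:
  assumes A: "A \<in> carrier_mat r n" and B: "B \<in> carrier_mat q n"
  shows "(A @\<^sub>r B) * adj (A @\<^sub>r B) = four_block_mat (A * adj A) (A * adj B) (B * adj A) (B * adj B)"
proof -
  have "A @\<^sub>r B = four_block_mat A (0\<^sub>m r 0) B (0\<^sub>m q 0)"
    using A B by (simp add: append_rows_def)
  then show ?thesis
    unfolding adj_append_rows[OF A B]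
    using A B by (simp add: mult_four_block_mat[OF A zero_carrier_mat B zero_carrier_mat
        adj_carrier_mat[OF A] adj_carrier_mat[OF B] zero_carrier_mat zero_carrier_mat])
qed

lemma adj_append_rows_mult:
  assumes A: "A \<in> carrier_mat r n" and B: "B \<in> carrier_mat q n"
  shows "adj (A @\<^sub>r B) * (A @\<^sub>r B) = adj A * A + adj B * B"
proof -
  have "A @\<^sub>r B = four_block_mat A (0\<^sub>m r 0) B (0\<^sub>m q 0)"
    using A B by (simp add: append_rows_def)
  then have "adj (A @\<^sub>r B) * (A @\<^sub>r B) = four_block_mat (adj A * A + adj B * B)
      (0\<^sub>m n 0) (0\<^sub>m 0 n) (0\<^sub>m 0 0)"
    unfolding adj_append_rows[OF A B]
    using A B by (simp add: mult_four_block_mat[OF adj_carrier_mat[OF A] adj_carrier_mat[OF B]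
        zero_carrier_mat zero_carrier_mat A zero_carrier_mat B zero_carrier_mat])
  also have "\<dots> = adj A * A + adj B * B"
    by (rule eq_matI) (use A B in auto)
  finally show ?thesis .
qed

section \<open>Sylvester's determinant identity\<close>

lemma det_one_minus_mult_commute:
  fixes A B :: "'a :: idom mat"
  assumes A: "A \<in> carrier_mat m k" and B: "B \<in> carrier_mat k m"
  shows "det (1\<^sub>m k - B * A) = det (1\<^sub>m m - A * B)"
proof -
  let ?X = "four_block_mat (1\<^sub>m m) A B (1\<^sub>m k)"
  have AB: "1\<^sub>m m - A * B \<in> carrier_mat m m" and BA: "1\<^sub>m k - B * A \<in> carrier_mat k k"
    using A B by auto
  have "?X = four_block_mat (1\<^sub>m m) A (0\<^sub>m k m) (1\<^sub>m k)
      * four_block_mat (1\<^sub>m m - A * B) (0\<^sub>m m k) B (1\<^sub>m k)"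
    by (subst mult_four_block_mat[OF _ A _ _ AB _ B]) (use A B in \<open>auto intro!: eq_matI\<close>)
  then have "det ?X = det (1\<^sub>m m - A * B)"
    using A B AB
    by (simp add: det_mult[of _ "m + k"] det_four_block_mat_lower_left_zero[where n = m and m = k]
        det_four_block_mat_upper_right_zero[where n = m and m = k])
  moreover have "?X = four_block_mat (1\<^sub>m m) (0\<^sub>m m k) B (1\<^sub>m k)
      * four_block_mat (1\<^sub>m m) A (0\<^sub>m k m) (1\<^sub>m k - B * A)"
    by (subst mult_four_block_mat[OF _ _ B _ _ A _ BA]) (use A B in \<open>auto intro!: eq_matI\<close>)
  then have "det ?X = det (1\<^sub>m k - B * A)"
    using A B BA
    by (simp add: det_mult[of _ "m + k"] det_four_block_mat_lower_left_zero[where n = m and m = k]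
        det_four_block_mat_upper_right_zero[where n = m and m = k])
  ultimately show ?thesis by simp
qed

section \<open>Volumes of complementary column submatrices\<close>

lemma bij_betw_pick: "finite K \<Longrightarrow> bij_betw (pick K) {..<card K} K"
proof (rule bij_betw_imageI)
  show "inj_on (pick K) {..<card K}"
    by (rule linorder_inj_onI') (auto dest: pick_mono_le)
  assume "finite K"
  show "pick K ` {..<card K} = K"
  proof
    show "pick K ` {..<card K} \<subseteq> K" by (auto intro: pick_in_set_le)
    show "K \<subseteq> pick K ` {..<card K}"
    proof
      fix x assume "x \<in> K"
      then have "x = pick K (card {a\<in>K. a < x})" and "card {a\<in>K. a < x} < card K"
        using pick_card_in_set \<open>finite K\<close> by (auto intro!: psubset_card_mono)
      then show "x \<in> pick K ` {..<card K}" by blast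
    qed
  qed
qed

lemma Collect_less_mem_eq: "K \<subseteq> {..<M} \<Longrightarrow> {j. j < M \<and> j \<in> K} = K"
  by blast

lemma pick_less: "K \<subseteq> {..<M} \<Longrightarrow> j < card K \<Longrightarrow> pick K j < M"
  using pick_in_set_le by blast

lemma cols_sub_carrier:
  assumes "X \<in> carrier_mat n M" "K \<subseteq> {..<M}"
  shows "cols_sub X K \<in> carrier_mat n (card K)"
  using assms unfolding cols_sub_def by (auto simp: dim_submatrix Collect_less_mem_eq)

lemma cols_sub_index:
  assumes "X \<in> carrier_mat n M" "K \<subseteq> {..<M}" "i < n" "j < card K"
  shows "cols_sub X K $$ (i,j) = X $$ (i, pick K j)"
  using assms unfolding cols_sub_def
  by (subst submatrix_index) (auto simp: pick_UNIV Collect_less_mem_eq)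

lemma adj_cols_sub_mult:
  assumes X: "X \<in> carrier_mat n M" and K: "K \<subseteq> {..<M}"
  shows "adj (cols_sub X K) * cols_sub X K = submatrix (adj X * X) K K"
proof (rule eq_matI)
  fix i j assume "i < dim_row (submatrix (adj X * X) K K)" "j < dim_col (submatrix (adj X * X) K K)"
  then have i: "i < card K" and j: "j < card K"
    using X by (simp_all add: dim_submatrix Collect_less_mem_eq[OF K])
  then have "(adj (cols_sub X K) * cols_sub X K) $$ (i,j) = (adj X * X) $$ (pick K i, pick K j)"
    using X cols_sub_carrier[OF X K] pick_less[OF K]
    by (auto simp: scalar_prod_def cols_sub_index[OF X K] intro!: sum.cong)
  also have "\<dots> = submatrix (adj X * X) K K $$ (i,j)"
    using X i j by (simp add: submatrix_index Collect_less_mem_eq[OF K])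
  finally show "(adj (cols_sub X K) * cols_sub X K) $$ (i,j) = submatrix (adj X * X) K K $$ (i,j)" .
qed (use X cols_sub_carrier[OF X K] in \<open>simp_all add: dim_submatrix Collect_less_mem_eq[OF K]\<close>)

lemma submatrix_one_minus:
  assumes A: "A \<in> carrier_mat M M" and K: "K \<subseteq> {..<M}"
  shows "submatrix (1\<^sub>m M - A) K K = 1\<^sub>m (card K) - submatrix A K K"
proof (rule eq_matI)
  have inj: "inj_on (pick K) {..<card K}"
    using bij_betw_pick[OF finite_subset[OF K finite_lessThan]] by (rule bij_betw_imp_inj_on)
  fix i j assume "i < dim_row (1\<^sub>m (card K) - submatrix A K K)"
    "j < dim_col (1\<^sub>m (card K) - submatrix A K K)"
  then have i: "i < card K" and j: "j < card K"
    using A by (simp_all add: dim_submatrix Collect_less_mem_eq[OF K])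
  have "pick K i = pick K j \<longleftrightarrow> i = j" using inj_onD[OF inj] i j by auto
  then show "submatrix (1\<^sub>m M - A) K K $$ (i, j) = (1\<^sub>m (card K) - submatrix A K K) $$ (i, j)"
    using A i j pick_less[OF K]
    by (simp add: dim_submatrix submatrix_index Collect_less_mem_eq[OF K])
qed (use A in \<open>simp_all add: dim_submatrix\<close>)

lemma cols_sub_mult_adj_index:
  assumes X: "X \<in> carrier_mat n M" and K: "K \<subseteq> {..<M}" and a: "a < n" and b: "b < n"
  shows "(cols_sub X K * adj (cols_sub X K)) $$ (a,b) = (\<Sum>j\<in>K. X $$ (a,j) * cnj (X $$ (b,j)))"
proof -
  have "(cols_sub X K * adj (cols_sub X K)) $$ (a,b)
      = (\<Sum>i<card K. X $$ (a, pick K i) * cnj (X $$ (b, pick K i)))"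
    using cols_sub_carrier[OF X K] X a b
    by (auto simp: scalar_prod_def cols_sub_index[OF X K] atLeast0LessThan intro!: sum.cong)
  also have "\<dots> = (\<Sum>j\<in>K. X $$ (a,j) * cnj (X $$ (b,j)))"
    using sum.reindex_bij_betw[OF bij_betw_pick[OF finite_subset[OF K finite_lessThan]]] by simp
  finally show ?thesis .
qed

lemma cols_sub_complement_mult_adj:
  assumes X: "X \<in> carrier_mat n M" and K: "K \<subseteq> {..<M}"
  shows "cols_sub X ({..<M} - K) * adj (cols_sub X ({..<M} - K))
    = X * adj X - cols_sub X K * adj (cols_sub X K)"
proof (rule eq_matI)
  fix a b assume "a < dim_row (X * adj X - cols_sub X K * adj (cols_sub X K))"
    "b < dim_col (X * adj X - cols_sub X K * adj (cols_sub X K))"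
  then have a: "a < n" and b: "b < n" using cols_sub_carrier[OF X K] by auto
  let ?f = "\<lambda>j. X $$ (a,j) * cnj (X $$ (b,j))"
  have "(X * adj X) $$ (a,b) = sum ?f {..<M}"
    using X a b by (auto simp: scalar_prod_def atLeast0LessThan intro!: sum.cong)
  also have "\<dots> = sum ?f K + sum ?f ({..<M} - K)"
    using sum.subset_diff[OF K finite_lessThan] by (simp add: add.commute)
  finally show "(cols_sub X ({..<M} - K) * adj (cols_sub X ({..<M} - K))) $$ (a,b)
      = (X * adj X - cols_sub X K * adj (cols_sub X K)) $$ (a,b)"
    using a b X cols_sub_carrier[OF X K]
    by (simp add: cols_sub_mult_adj_index[OF X K a b] cols_sub_mult_adj_index[OF X _ a b])
qed (use cols_sub_carrier[OF X K] cols_sub_carrier[OF X, of "{..<M} - K"] in auto)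

lemma vol_eq_covol_complement:
  assumes Phi: "Phi \<in> carrier_mat n M" and Psi: "Psi \<in> carrier_mat m M"
    and Psi_orth: "Psi * adj Psi = 1\<^sub>m m" and compl: "adj Psi * Psi = 1\<^sub>m M - adj Phi * Phi"
    and K: "K \<subseteq> {..<M}"
  shows "vol (cols_sub Phi K) = covol (cols_sub Psi ({..<M} - K))"
proof -
  define A where "A = cols_sub Psi K"
  define B where "B = cols_sub Psi ({..<M} - K)"
  have A_carrier: "A \<in> carrier_mat m (card K)" unfolding A_def by (rule cols_sub_carrier[OF Psi K])
  have "adj Phi * Phi = 1\<^sub>m M - adj Psi * Psi"
    by (rule one_minus_eq_swap[OF _ _ compl]) (use Phi Psi in auto)
  then have "adj (cols_sub Phi K) * cols_sub Phi K = 1\<^sub>m (card K) - adj A * A"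
    unfolding A_def adj_cols_sub_mult[OF Phi K] adj_cols_sub_mult[OF Psi K]
    by (simp add: submatrix_one_minus[OF adj_mult_self_carrier[OF Psi] K])
  moreover have "B * adj B = 1\<^sub>m m - A * adj A"
    unfolding A_def B_def by (simp add: cols_sub_complement_mult_adj[OF Psi K] Psi_orth)
  moreover have "det (1\<^sub>m (card K) - adj A * A) = det (1\<^sub>m m - A * adj A)"
    by (rule det_one_minus_mult_commute) (use A_carrier in auto)
  ultimately show ?thesis unfolding vol_def covol_def B_def by simp
qed

lemma V_eq_CV_complement:
  assumes Phi: "Phi \<in> carrier_mat n M" and Psi: "Psi \<in> carrier_mat m M"
    and Psi_orth: "Psi * adj Psi = 1\<^sub>m m" and compl: "adj Psi * Psi = 1\<^sub>m M - adj Phi * Phi"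
    and k: "k \<le> M"
  shows "V k Phi = CV (M - k) Psi"
proof -
  define S where "S = (\<lambda>k. {K. K \<subseteq> {..<M} \<and> card K = k})"
  have "bij_betw (\<lambda>K. {..<M} - K) (S k) (S (M - k))"
    by (rule bij_betw_byWitness[where f' = "\<lambda>K. {..<M} - K"])
      (use k in \<open>auto simp: S_def card_Diff_subset finite_subset\<close>)
  then have "(\<Sum>K\<in>S k. covol (cols_sub Psi ({..<M} - K))) = (\<Sum>K\<in>S (M - k). covol (cols_sub Psi K))"
    by (rule sum.reindex_bij_betw)
  moreover have "V k Phi = (\<Sum>K\<in>S k. covol (cols_sub Psi ({..<M} - K)))"
    unfolding V_def S_def using Phi
    by (auto intro!: sum.cong vol_eq_covol_complement[OF Phi Psi Psi_orth compl])
  ultimately show ?thesis unfolding CV_def S_def using Psi by simp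
qed

definition trace :: "'a :: comm_ring_1 mat \<Rightarrow> 'a" where
  "trace A = (\<Sum>i<dim_row A. A $$ (i,i))"

lemma trace_one [simp]: "trace (1\<^sub>m n) = of_nat n"
  unfolding trace_def by simp

lemma trace_minus: "A \<in> carrier_mat n n \<Longrightarrow> B \<in> carrier_mat n n \<Longrightarrow> trace (A - B) = trace A - trace B"
  unfolding trace_def by (simp add: sum_subtractf)

lemma trace_mult_comm:
  assumes A: "A \<in> carrier_mat n m" and B: "B \<in> carrier_mat m n"
  shows "trace (A * B) = trace (B * A)"
proof -
  have "trace (A * B) = (\<Sum>i<n. \<Sum>k<m. A $$ (i,k) * B $$ (k,i))"
    unfolding trace_def using A B by (auto simp: scalar_prod_def atLeast0LessThan intro!: sum.cong)
  also have "\<dots> = (\<Sum>k<m. \<Sum>i<n. B $$ (k,i) * A $$ (i,k))"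
    by (subst sum.swap) (simp add: mult.commute)
  also have "\<dots> = trace (B * A)"
    unfolding trace_def using A B by (auto simp: scalar_prod_def atLeast0LessThan intro!: sum.cong)
  finally show ?thesis .
qed

lemma adj_mult_self_index:
  assumes "A \<in> carrier_mat n m" "j < m"
  shows "(adj A * A) $$ (j,j) = of_real (\<Sum>i<n. (cmod (A $$ (i,j)))\<^sup>2)"
  using assms by (simp add: scalar_prod_def atLeast0LessThan mult.commute flip: complex_norm_square)

lemma trace_adj_mult_self_nonneg:
  assumes A: "A \<in> carrier_mat n m"
  shows "0 \<le> Re (trace (adj A * A))"
proof -
  have "Re (trace (adj A * A)) = (\<Sum>j<m. Re ((adj A * A) $$ (j,j)))"
    using A by (simp add: trace_def Re_sum del: index_mult_mat(1))
  also have "\<dots> = (\<Sum>j<m. \<Sum>i<n. (cmod (A $$ (i,j)))\<^sup>2)"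
    by (intro sum.cong refl) (simp add: adj_mult_self_index[OF A] del: index_mult_mat(1))
  finally show ?thesis by (simp add: sum_nonneg)
qed

definition mat_over :: "complex set \<Rightarrow> complex mat \<Rightarrow> bool" where
  "mat_over F A \<longleftrightarrow> (\<forall>i<dim_row A. \<forall>j<dim_col A. A $$ (i,j) \<in> F)"

lemma mat_over_one: "mat_over (scalars s) (1\<^sub>m n)"
  unfolding mat_over_def scalars_def by auto

lemma mat_over_adj: "mat_over (scalars s) A \<Longrightarrow> mat_over (scalars s) (adj A)"
  unfolding mat_over_def scalars_def by (auto simp: Reals_cnj_iff)

lemma mat_over_minus:
  "dim_row A = dim_row B \<Longrightarrow> dim_col A = dim_col B \<Longrightarrow>
   mat_over (scalars s) A \<Longrightarrow> mat_over (scalars s) B \<Longrightarrow> mat_over (scalars s) (A - B)"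
  unfolding mat_over_def scalars_def by auto

lemma mat_over_mult:
  "dim_col A = dim_row B \<Longrightarrow> mat_over (scalars s) A \<Longrightarrow> mat_over (scalars s) B \<Longrightarrow>
   mat_over (scalars s) (A * B)"
  unfolding mat_over_def scalars_def by (auto simp: scalar_prod_def)

lemma mat_over_append_rows:
  "dim_col A = dim_col B \<Longrightarrow> mat_over F A \<Longrightarrow> mat_over F B \<Longrightarrow> mat_over F (A @\<^sub>r B)"
  unfolding mat_over_def append_rows_def by auto

lemma scalars_divide_of_real:
  "x \<in> scalars s \<Longrightarrow> x / of_real w \<in> scalars s"
  unfolding scalars_def by auto

lemma parseval_iff:
  "parseval s M n Phi \<longleftrightarrow> Phi \<in> carrier_mat n M \<and> mat_over (scalars s) Phi \<and> Phi * adj Phi = 1\<^sub>m n"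
  unfolding parseval_def mat_over_def by auto

section \<open>Factoring orthogonal projections\<close>

definition orthogonal_projection :: "nat \<Rightarrow> complex mat \<Rightarrow> bool" where
  "orthogonal_projection n P \<longleftrightarrow> P \<in> carrier_mat n n \<and> adj P = P \<and> P * P = P"

lemma orthogonal_projection_one: "orthogonal_projection n (1\<^sub>m n)"
  unfolding orthogonal_projection_def by simp

lemma orthogonal_projection_gram:
  assumes A: "A \<in> carrier_mat r n" and orth: "A * adj A = 1\<^sub>m r"
  shows "orthogonal_projection n (adj A * A)"
proof -
  have "adj A * A * (adj A * A) = adj A * (A * (adj A * A))"
    by (rule assoc_mult_mat) (use A in auto)
  also have "A * (adj A * A) = A" by (rule mult_adj_mult_self[OF A orth])
  finally show ?thesis
    unfolding orthogonal_projection_def using A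
    by (simp add: adj_mult_self_carrier[OF A] adj_mult[of _ n r _ n])
qed

lemma orthogonal_projection_diff:
  assumes P: "orthogonal_projection n P" and Q: "orthogonal_projection n Q" and PQ: "P * Q = Q"
  shows "orthogonal_projection n (P - Q)"
proof -
  have carrier: "P \<in> carrier_mat n n" "Q \<in> carrier_mat n n"
    using P Q unfolding orthogonal_projection_def by auto
  have "Q * P = adj (P * Q)"
    using P Q carrier unfolding orthogonal_projection_def by (simp add: adj_mult)
  then have QP: "Q * P = Q" using PQ Q unfolding orthogonal_projection_def by simp
  have "(P - Q) * (P - Q) = P * (P - Q) - Q * (P - Q)"
    by (rule minus_mult_distrib_mat) (use carrier in auto)
  also have "P * (P - Q) = P * P - P * Q"
    by (rule mult_minus_distrib_mat) (use carrier in auto)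
  also have "Q * (P - Q) = Q * P - Q * Q"
    by (rule mult_minus_distrib_mat) (use carrier in auto)
  also have "P * P - P * Q - (Q * P - Q * Q) = P - Q"
    using P Q PQ QP carrier unfolding orthogonal_projection_def by (intro eq_matI) auto
  finally show ?thesis
    using P Q carrier unfolding orthogonal_projection_def by (simp add: adj_minus minus_carrier_mat)
qed

lemma orthogonal_projection_minus_rank_one:
  assumes P: "orthogonal_projection n P"
    and R: "R \<in> carrier_mat 1 n" "R * adj R = 1\<^sub>m 1" and PR: "P * adj R = adj R"
  shows "orthogonal_projection n (P - adj R * R)"
    and "(P - adj R * R) * adj R = 0\<^sub>m n 1"
    and "trace (P - adj R * R) = trace P - 1"
proof -
  have P_carrier: "P \<in> carrier_mat n n" using P unfolding orthogonal_projection_def by simp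
  note RR = adj_mult_self_carrier[OF R(1)]
  have "P * (adj R * R) = P * adj R * R"
    by (rule assoc_mult_mat[symmetric]) (use P_carrier R in auto)
  then have "P * (adj R * R) = adj R * R" using PR by simp
  with P orthogonal_projection_gram[OF R(1,2)]
  show "orthogonal_projection n (P - adj R * R)" by (rule orthogonal_projection_diff)
  have "adj R * R * adj R = adj R"
    using mult_adj_mult_self[of "adj R" 1 n] R by (simp add: assoc_mult_mat[of _ n 1 _ n _ 1])
  then show "(P - adj R * R) * adj R = 0\<^sub>m n 1"
    using R PR
    by (simp add: minus_mult_distrib_mat[OF P_carrier RR adj_carrier_mat[OF R(1)]] minus_r_inv_mat)
  show "trace (P - adj R * R) = trace P - 1"
    using R
    by (simp add: trace_minus[OF P_carrier RR] trace_mult_comm[OF adj_carrier_mat[OF R(1)] R(1)])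
qed

lemma exists_unit_row_in_range:
  assumes P: "orthogonal_projection M P" and P_over: "mat_over (scalars s) P"
    and nonzero: "P \<noteq> 0\<^sub>m M M"
  shows "\<exists>R. R \<in> carrier_mat 1 M \<and> R * adj R = 1\<^sub>m 1 \<and> P * adj R = adj R \<and> mat_over (scalars s) R"
proof -
  have P_carrier: "P \<in> carrier_mat M M" and P_herm: "adj P = P" and P_idem: "P * P = P"
    using P unfolding orthogonal_projection_def by auto
  obtain j k where j: "j < M" and k: "k < M" and jk: "P $$ (j,k) \<noteq> 0"
    using nonzero P_carrier by (metis carrier_matD eq_matI index_zero_mat)
  have sym: "cnj (P $$ (i,l)) = P $$ (l,i)" if "i < M" "l < M" for i l
    using arg_cong[OF P_herm, of "\<lambda>A. A $$ (l,i)"] that P_carrier by simp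
  define w where "w = sqrt (\<Sum>l<M. (cmod (P $$ (j,l)))\<^sup>2)"
  have "0 < (cmod (P $$ (j,k)))\<^sup>2" using jk by simp
  also have "\<dots> \<le> (\<Sum>l<M. (cmod (P $$ (j,l)))\<^sup>2)"
    by (rule member_le_sum) (use k in auto)
  finally have sum_pos: "0 < (\<Sum>l<M. (cmod (P $$ (j,l)))\<^sup>2)" .
  then have w: "0 < w" unfolding w_def by simp
  \<comment> \<open>\<open>adj R\<close> is the normalised \<open>j\<close>-th column of \<open>P\<close>.\<close>
  define R where "R = mat 1 M (\<lambda>(_,l). P $$ (j,l) / of_real w)"
  have R: "R \<in> carrier_mat 1 M" unfolding R_def by simp
  have "(\<Sum>l<M. (cmod (P $$ (j,l)) / w)\<^sup>2) = 1"
    using sum_pos unfolding w_def by (simp add: power_divide flip: sum_divide_distrib)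
  moreover have "(R * adj R) $$ (0,0) = of_real (\<Sum>l<M. (cmod (P $$ (j,l)) / w)\<^sup>2)"
    using adj_mult_self_index[OF adj_carrier_mat[OF R], of 0] R w
    by (simp add: R_def norm_divide)
  ultimately have "R * adj R = 1\<^sub>m 1"
    using R by (intro eq_matI) auto
  moreover have "P * adj R = adj R"
  proof (rule eq_matI)
    fix i l assume "i < dim_row (adj R)" "l < dim_col (adj R)"
    then have i: "i < M" and l: "l = 0" using R by auto
    have "(P * adj R) $$ (i,0) = (\<Sum>m<M. P $$ (i,m) * P $$ (m,j)) / of_real w"
      using P_carrier R i j sym
      by (auto simp: R_def scalar_prod_def atLeast0LessThan sum_divide_distrib intro!: sum.cong)
    also have "\<dots> = P $$ (i,j) / of_real w"
      using arg_cong[OF P_idem, of "\<lambda>A. A $$ (i,j)"] P_carrier i j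
      by (simp add: scalar_prod_def atLeast0LessThan)
    also have "\<dots> = adj R $$ (i,0)"
      using i j sym by (simp add: R_def)
    finally show "(P * adj R) $$ (i,l) = adj R $$ (i,l)" using l by simp
  qed (use P_carrier R in auto)
  moreover have "mat_over (scalars s) R"
    using P_over P_carrier j unfolding mat_over_def R_def
    by (auto intro: scalars_divide_of_real)
  ultimately show ?thesis using R by blast
qed

lemma append_row_orthonormal:
  assumes Psi: "Psi \<in> carrier_mat r n" "Psi * adj Psi = 1\<^sub>m r"
    and R: "R \<in> carrier_mat 1 n" "R * adj R = 1\<^sub>m 1"
    and orth: "adj Psi * Psi * adj R = 0\<^sub>m n 1"
  shows "(Psi @\<^sub>r R) * adj (Psi @\<^sub>r R) = 1\<^sub>m (Suc r)"
proof -
  have "Psi * adj R = Psi * (adj Psi * Psi) * adj R"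
    using mult_adj_mult_self[OF Psi] by simp
  also have "\<dots> = Psi * (adj Psi * Psi * adj R)"
    by (rule assoc_mult_mat) (use Psi R in \<open>auto intro: mult_carrier_mat\<close>)
  finally have Psi_R: "Psi * adj R = 0\<^sub>m r 1" using Psi orth by simp
  have "R * adj Psi = adj (Psi * adj R)"
    by (simp add: adj_mult[OF Psi(1) adj_carrier_mat[OF R(1)]])
  then have "R * adj Psi = 0\<^sub>m 1 r" using Psi_R by simp
  then show ?thesis
    using Psi R Psi_R append_rows_mult_adj[OF Psi(1) R(1)]
    by (metis Suc_eq_plus1 four_block_one_mat)
qed

lemma orthogonal_projection_factorization:
  assumes "orthogonal_projection M P" and "mat_over (scalars s) P"
  shows "\<exists>r Psi. Psi \<in> carrier_mat r M \<and> Psi * adj Psi = 1\<^sub>m r \<and> adj Psi * Psi = P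
    \<and> mat_over (scalars s) Psi"
proof -
  \<comment> \<open>Induction on a bound for the rank \<open>Re (trace P)\<close>: splitting off one unit vector
    of the range lowers the trace by one.\<close>
  obtain n :: nat where "Re (trace P) < n" using reals_Archimedean2 by blast
  with assms show ?thesis
  proof (induction n arbitrary: P)
    case 0
    then have "P = adj P * P" unfolding orthogonal_projection_def by simp
    then have "0 \<le> Re (trace P)"
      using trace_adj_mult_self_nonneg "0.prems"(1) unfolding orthogonal_projection_def by metis
    with "0.prems"(3) show ?case by simp
  next
    case (Suc n)
    show ?case
    proof (cases "P = 0\<^sub>m M M")
      case True
      have "0\<^sub>m 0 M * adj (0\<^sub>m 0 M) = (1\<^sub>m 0 :: complex mat)" by (rule eq_matI) auto
      moreover have "adj (0\<^sub>m 0 M) * 0\<^sub>m 0 M = P" using True by (intro eq_matI) auto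
      ultimately show ?thesis unfolding mat_over_def by (intro exI[of _ 0] exI[of _ "0\<^sub>m 0 M"]) auto
    next
      case False
      obtain R where R: "R \<in> carrier_mat 1 M" "R * adj R = 1\<^sub>m 1" "P * adj R = adj R"
        and R_over: "mat_over (scalars s) R"
        using exists_unit_row_in_range[OF Suc.prems(1,2) False] by blast
      have P: "P \<in> carrier_mat M M" using Suc.prems(1) unfolding orthogonal_projection_def by simp
      define P' where "P' = P - adj R * R"
      note P' = orthogonal_projection_minus_rank_one[OF Suc.prems(1) R, folded P'_def]
      have "mat_over (scalars s) P'"
        unfolding P'_def using Suc.prems(2) R R_over P
        by (intro mat_over_minus mat_over_mult mat_over_adj) auto
      moreover have "Re (trace P') < n" using Suc.prems(3) P'(3) by simp
      ultimately obtain r Psi where Psi: "Psi \<in> carrier_mat r M" "Psi * adj Psi = 1\<^sub>m r"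
        and Psi_P': "adj Psi * Psi = P'" and Psi_over: "mat_over (scalars s) Psi"
        using Suc.IH[OF P'(1)] by blast
      from P'(2) have "(Psi @\<^sub>r R) * adj (Psi @\<^sub>r R) = 1\<^sub>m (Suc r)"
        using append_row_orthonormal[OF Psi R(1,2)] Psi_P' by simp
      moreover have "adj (Psi @\<^sub>r R) * (Psi @\<^sub>r R) = P"
        unfolding adj_append_rows_mult[OF Psi(1) R(1)] Psi_P' P'_def using P R
        by (intro eq_matI) auto
      moreover have "Psi @\<^sub>r R \<in> carrier_mat (Suc r) M"
        using carrier_append_rows[OF Psi(1) R(1)] by simp
      moreover have "mat_over (scalars s) (Psi @\<^sub>r R)"
        using Psi R Psi_over R_over by (intro mat_over_append_rows) auto
      ultimately show ?thesis by blast
    qed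
  qed
qed

section \<open>Naimark complements\<close>

lemma naimark_complement_exists:
  assumes Phi: "parseval s M n Phi" and n: "n \<le> M"
  shows "\<exists>Psi. parseval s M (M - n) Psi \<and> naimark_complements Phi Psi"
proof -
  have Phi_carrier: "Phi \<in> carrier_mat n M" and Phi_over: "mat_over (scalars s) Phi"
    and Phi_orth: "Phi * adj Phi = 1\<^sub>m n"
    using Phi unfolding parseval_iff by auto
  note gram = adj_mult_self_carrier[OF Phi_carrier]
  define P where "P = 1\<^sub>m M - adj Phi * Phi"
  have "orthogonal_projection M P"
    unfolding P_def
    using orthogonal_projection_one orthogonal_projection_gram[OF Phi_carrier Phi_orth]
    by (rule orthogonal_projection_diff) (rule left_mult_one_mat[OF gram])
  moreover have "mat_over (scalars s) P"
    unfolding P_def using Phi_carrier Phi_over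
    by (intro mat_over_minus mat_over_mult mat_over_adj mat_over_one) auto
  ultimately obtain r Psi where Psi: "Psi \<in> carrier_mat r M" "Psi * adj Psi = 1\<^sub>m r"
    and Psi_P: "adj Psi * Psi = P" and Psi_over: "mat_over (scalars s) Psi"
    using orthogonal_projection_factorization by blast
  have "of_nat r = trace (Psi * adj Psi)" using Psi by simp
  also have "\<dots> = trace P"
    unfolding Psi_P[symmetric] by (rule trace_mult_comm[OF Psi(1) adj_carrier_mat[OF Psi(1)]])
  also have "\<dots> = of_nat M - trace (Phi * adj Phi)"
    unfolding P_def
    by (simp add: trace_minus[OF _ gram]
        trace_mult_comm[OF adj_carrier_mat[OF Phi_carrier] Phi_carrier])
  finally have "(of_nat r :: complex) = of_nat (M - n)"
    using n Phi_orth by (simp add: of_nat_diff)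
  then have "r = M - n" by (simp only: of_nat_eq_iff)
  then show ?thesis
    using Psi Psi_P Psi_over Phi_carrier
    unfolding parseval_iff naimark_complements_def P_def by auto
qed

lemma naimark_complements_sym:
  assumes "parseval s M n Phi" "parseval s M m Psi" "naimark_complements Phi Psi"
  shows "naimark_complements Psi Phi"
proof -
  have carrier: "Phi \<in> carrier_mat n M" "Psi \<in> carrier_mat m M"
    using assms(1,2) unfolding parseval_def by auto
  then have "adj Psi * Psi = 1\<^sub>m M - adj Phi * Phi"
    using assms(3) unfolding naimark_complements_def by simp
  then have "adj Phi * Phi = 1\<^sub>m M - adj Psi * Psi"
    by (rule one_minus_eq_swap[OF adj_mult_self_carrier[OF carrier(2)]
          adj_mult_self_carrier[OF carrier(1)]])
  then show ?thesis using carrier unfolding naimark_complements_def by simp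
qed

lemma V_eq_CV_naimark_complements:
  assumes "parseval s M n Phi" "parseval s M m Psi" "naimark_complements Phi Psi" and "k \<le> M"
  shows "V k Phi = CV (M - k) Psi"
proof -
  have carrier: "Phi \<in> carrier_mat n M" "Psi \<in> carrier_mat m M" and "Psi * adj Psi = 1\<^sub>m m"
    using assms(1,2) unfolding parseval_def by auto
  moreover have "adj Psi * Psi = 1\<^sub>m M - adj Phi * Phi"
    using assms(3) carrier unfolding naimark_complements_def by simp
  ultimately show ?thesis by (rule V_eq_CV_complement[OF _ _ _ _ assms(4)])
qed

lemma maximizer_iff_of_correspondence:
  fixes f g :: "'a \<Rightarrow> 'c :: preorder"
  assumes A_to_B: "\<And>x. A x \<Longrightarrow> \<exists>y. B y \<and> R x y"
    and B_to_A: "\<And>y. B y \<Longrightarrow> \<exists>x. A x \<and> R x y"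
    and f_g: "\<And>x y. A x \<Longrightarrow> B y \<Longrightarrow> R x y \<Longrightarrow> f x = g y"
    and "A x\<^sub>0" "B y\<^sub>0" "R x\<^sub>0 y\<^sub>0"
  shows "(\<forall>x. A x \<longrightarrow> f x \<le> f x\<^sub>0) \<longleftrightarrow> (\<forall>y. B y \<longrightarrow> g y \<le> g y\<^sub>0)"
proof -
  have f_g_0: "f x\<^sub>0 = g y\<^sub>0" by (rule f_g) fact+
  show ?thesis
  proof (intro iffI allI impI)
    fix y assume max: "\<forall>x. A x \<longrightarrow> f x \<le> f x\<^sub>0" and "B y"
    then obtain x where "A x" "R x y" using B_to_A by blast
    then have "f x \<le> f x\<^sub>0" using max by blast
    then show "g y \<le> g y\<^sub>0" using f_g[OF \<open>A x\<close> \<open>B y\<close> \<open>R x y\<close>] f_g_0 by simp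
  next
    fix x assume max: "\<forall>y. B y \<longrightarrow> g y \<le> g y\<^sub>0" and "A x"
    then obtain y where "B y" "R x y" using A_to_B by blast
    then have "g y \<le> g y\<^sub>0" using max by blast
    then show "f x \<le> f x\<^sub>0" using f_g[OF \<open>A x\<close> \<open>B y\<close> \<open>R x y\<close>] f_g_0 by simp
  qed
qed

theorem proposition14:
  fixes is_real :: bool and k N M :: nat and Phi Psi :: "complex mat"
  assumes "1 \<le> k" and "k \<le> N" and "N < M"
    and "parseval is_real M N Phi"
    and "parseval is_real M (M - N) Psi"
    and "naimark_complements Phi Psi"
  shows "(\<forall>Phi'. parseval is_real M N Phi' \<longrightarrow> V k Phi' \<le> V k Phi) \<longleftrightarrow>
         (\<forall>Psi'. parseval is_real M (M - N) Psi' \<longrightarrow> CV (M - k) Psi' \<le> CV (M - k) Psi)"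
proof -
  have V_CV: "V k Phi' = CV (M - k) Psi'"
    if "parseval is_real M N Phi'" "parseval is_real M (M - N) Psi'" "naimark_complements Phi' Psi'"
    for Phi' Psi'
    using V_eq_CV_naimark_complements[OF that] assms(2,3) by simp
  have Phi_complement: "\<exists>Psi'. parseval is_real M (M - N) Psi' \<and> naimark_complements Phi' Psi'"
    if "parseval is_real M N Phi'" for Phi'
    using naimark_complement_exists[OF that] assms(3) by simp
  have Psi_complement: "\<exists>Phi'. parseval is_real M N Phi' \<and> naimark_complements Phi' Psi'"
    if Psi': "parseval is_real M (M - N) Psi'" for Psi'
  proof -
    obtain Phi' where "parseval is_real M N Phi'" "naimark_complements Psi' Phi'"
      using naimark_complement_exists[OF Psi' diff_le_self] assms(3) by auto
    then show ?thesis using naimark_complements_sym Psi' by blast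
  qed
  show ?thesis
    by (rule maximizer_iff_of_correspondence[OF Phi_complement Psi_complement V_CV assms(4-6)])
qed

end
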